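(* Let $\mathcal{H}_{A_1},\mathcal{H}_{A_2},\mathcal{H}_{B_1},\mathcal{H}_{B_2}$ be finite-dimensional Hilbert spaces with fixed reference bases of $\mathcal{H}_{A_1}$ and $\mathcal{H}_{A_2}$ (and the product basis on $\mathcal{H}_{A_1}\otimes\mathcal{H}_{A_2}$). For all states $\rho_{A_1B_1}$ and $\rho_{A_2B_2}$, $$C^{A_1A_2|B_1B_2}_f(\rho_{A_1B_1}\otimes\rho_{A_2B_2})=C^{A_1|B_1}_f(\rho_{A_1B_1})+C^{A_2|B_2}_f(\rho_{A_2B_2}).$$
   Context: $S$ is the von Neumann entropy. For a split $X|Y$ where $X$ has reference basis $\{|k\rangle_X\}$, $\Delta_X(\rho)=\sum_k(|k\rangle\langle k|_X\otimes I_Y)\rho(|k\rangle\langle k|_X\otimes I_Y)$, and the IQ coherence of formation is $C^{X|Y}_f(\rho_{XY})=\min\sum_ip_iS(\Delta_X(|\psi_i\rangle\langle\psi_i|_{XY}))$ over all pure-state decompositions $\rho_{XY}=\sum_ip_i|\psi_i\rangle\langle\psi_i|_{XY}$. *)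

theory Defs
  imports "Jordan_Normal_Form.Schur_Decomposition" "HOL-Computational_Algebra.Polynomial"
begin

(* A composite space H_X (x) H_Y with dim dX, dY is C^(dX*dY) with the product
   basis index  x*dY + y  (x < dX, y < dY);  |x> is the reference basis of H_X. *)

definition is_state :: "nat \<Rightarrow> complex mat \<Rightarrow> bool" where
  "is_state n \<rho> \<longleftrightarrow> \<rho> \<in> carrier_mat n n \<and> mat_adjoint \<rho> = \<rho>
     \<and> (\<forall>v \<in> carrier_vec n. 0 \<le> Re (conjugate v \<bullet> (\<rho> *\<^sub>v v)))
     \<and> (\<Sum>i<n. \<rho> $$ (i, i)) = 1"

(* von Neumann entropy S(rho) = - sum over eigenvalues (with multiplicity) of l log2 l,
   with the convention 0 log 0 = 0 (log 2 0 = 0 in Isabelle). *)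
definition vN_entropy :: "complex mat \<Rightarrow> real" where
  "vN_entropy \<rho> = - sum_mset (image_mset (\<lambda>l. Re l * log 2 (Re l)) (proots (char_poly \<rho>)))"

definition proj :: "nat \<Rightarrow> complex vec \<Rightarrow> complex mat" where
  "proj n \<psi> = mat n n (\<lambda>(i, j). \<psi> $ i * cnj (\<psi> $ j))"

definition dephase :: "nat \<Rightarrow> nat \<Rightarrow> complex mat \<Rightarrow> complex mat" where
  "dephase dX dY M = mat (dX * dY) (dX * dY)
     (\<lambda>(i, j). if i div dY = j div dY then M $$ (i, j) else 0)"

definition pure_decomp :: "nat \<Rightarrow> complex mat \<Rightarrow> nat \<Rightarrow> (nat \<Rightarrow> real) \<Rightarrow> (nat \<Rightarrow> complex vec) \<Rightarrow> bool" where
  "pure_decomp n \<rho> m p \<psi> \<longleftrightarrow>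
     (\<forall>k<m. 0 \<le> p k \<and> \<psi> k \<in> carrier_vec n \<and> (\<Sum>i<n. (cmod (\<psi> k $ i))\<^sup>2) = 1)
     \<and> (\<Sum>k<m. p k) = 1
     \<and> \<rho> = mat n n (\<lambda>(i, j). \<Sum>k<m. complex_of_real (p k) * (\<psi> k $ i * cnj (\<psi> k $ j)))"

definition coh_form :: "nat \<Rightarrow> nat \<Rightarrow> complex mat \<Rightarrow> real" where
  "coh_form dX dY \<rho> = Inf {(\<Sum>k<m. p k * vN_entropy (dephase dX dY (proj (dX * dY) (\<psi> k)))) | m p \<psi>.
        pure_decomp (dX * dY) \<rho> m p \<psi>}"

(* rho1 on A1B1, rho2 on A2B2  ==>  rho1 (x) rho2 as an operator on (A1A2)(B1B2),
   with product basis |a1 a2> on A1A2 and |b1 b2> on B1B2. *)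
definition tensor_reorder :: "nat \<Rightarrow> nat \<Rightarrow> nat \<Rightarrow> nat \<Rightarrow> complex mat \<Rightarrow> complex mat \<Rightarrow> complex mat" where
  "tensor_reorder dA1 dB1 dA2 dB2 \<rho>1 \<rho>2 =
     (let dX = dA1 * dA2; dY = dB1 * dB2;
          a1 = (\<lambda>i. (i div dY) div dA2); a2 = (\<lambda>i. (i div dY) mod dA2);
          b1 = (\<lambda>i. (i mod dY) div dB2); b2 = (\<lambda>i. (i mod dY) mod dB2)
      in mat (dX * dY) (dX * dY) (\<lambda>(i, j).
           \<rho>1 $$ (a1 i * dB1 + b1 i, a1 j * dB1 + b1 j) * \<rho>2 $$ (a2 i * dB2 + b2 i, a2 j * dB2 + b2 j)))"

end

theory Submission
  imports Defs
begin

text \<open>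
  For a pure state \<open>\<psi>\<close> on \<open>X|Y\<close>, the dephased state \<open>\<Delta>\<^sub>X(|\<psi>\<rangle>\<langle>\<psi>|)\<close> is block diagonal
  with rank-one blocks, so its entropy is the Shannon entropy of the block weights
  \<open>q x = \<Sum>y. \<bar>\<psi> (x, y)\<bar>\<^sup>2\<close>. Writing every term \<open>p |\<psi>\<rangle>\<langle>\<psi>|\<close> of a decomposition as \<open>u u\<^sup>*\<close> with
  \<open>u = \<surd>p \<psi>\<close>, its contribution becomes the (homogeneous) Shannon entropy of the block weights of \<open>u\<close>.

  \<open>\<le>\<close>: products of decompositions of \<open>\<rho>\<^sub>1\<close> and \<open>\<rho>\<^sub>2\<close> decompose \<open>\<rho>\<^sub>1 \<otimes> \<rho>\<^sub>2\<close>, and the entropy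
  of a product weight is additive.
  \<open>\<ge>\<close>: a decomposition \<open>\<Sum>\<^sub>k u\<^sub>k u\<^sub>k\<^sup>*\<close> of \<open>\<rho>\<^sub>1 \<otimes> \<rho>\<^sub>2\<close> induces decompositions of \<open>\<rho>\<^sub>1\<close> and of \<open>\<rho>\<^sub>2\<close>
  by splitting each \<open>u\<^sub>k\<close> along the product basis of the other party; the chain rule and
  concavity of the Shannon entropy bound their values by that of the original decomposition.
  Decompositions exist at all because a positive semidefinite matrix is a sum of rank-one
  matrices (Gaussian elimination).
\<close>

lemma sum_lessThan_mult_nat:
  "(\<Sum>i<m * n. g i) = (\<Sum>x<m. \<Sum>y<n. g (x * n + y :: nat))"
proof -
  have "(\<Sum>i<m * n. g i) = (\<Sum>x<m. sum g {x * n..<x * n + n})"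
    by (rule sum.nat_group[symmetric])
  also have "\<dots> = (\<Sum>x<m. \<Sum>y<n. g (x * n + y))"
  proof (rule sum.cong[OF refl])
    fix x
    show "sum g {x * n..<x * n + n} = (\<Sum>y<n. g (x * n + y))"
      using sum.shift_bounds_nat_ivl[where g = g and m = 0 and k = "x * n" and n = n]
      by (simp add: add.commute atLeast0LessThan)
  qed
  finally show ?thesis .
qed

lemma mult_add_less_mult:
  fixes x y a b :: nat
  assumes "x < a" and "y < b"
  shows "x * b + y < a * b"
proof -
  have "x * b + y < Suc x * b" using assms by simp
  also have "\<dots> \<le> a * b" using assms by (intro mult_le_mono1) simp
  finally show ?thesis .
qed

section \<open>Entropy of dephased pure states\<close>

lemma sum_diag_mult_comm:
  fixes A B :: "'a :: comm_semiring_0 mat"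
  assumes "A \<in> carrier_mat n n" and "B \<in> carrier_mat n n"
  shows "(\<Sum>i<n. (A * B) $$ (i, i)) = (\<Sum>i<n. (B * A) $$ (i, i))"
proof -
  have "(\<Sum>i<n. (A * B) $$ (i, i)) = (\<Sum>i<n. \<Sum>j<n. A $$ (i, j) * B $$ (j, i))"
    using assms by (simp add: scalar_prod_def lessThan_atLeast0)
  also have "\<dots> = (\<Sum>j<n. \<Sum>i<n. B $$ (j, i) * A $$ (i, j))"
    by (subst sum.swap) (simp add: mult.commute)
  also have "\<dots> = (\<Sum>i<n. (B * A) $$ (i, i))"
    using assms by (simp add: scalar_prod_def lessThan_atLeast0)
  finally show ?thesis .
qed

lemma sum_list_eigenvalues_eq_sum_diag:
  fixes A :: "complex mat"
  assumes A: "A \<in> carrier_mat n n" and cp: "char_poly A = (\<Prod>a\<leftarrow>as. [:-a, 1:])"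
  shows "sum_list as = (\<Sum>i<n. A $$ (i, i))"
proof -
  obtain B P Q where "schur_decomposition A as = (B, P, Q)"
    by (cases "schur_decomposition A as") auto
  from schur_decomposition[OF A cp this]
  have "similar_mat_wit A B P Q" and diag: "diag_mat B = as" by auto
  then have B: "B \<in> carrier_mat n n" and P: "P \<in> carrier_mat n n" and Q: "Q \<in> carrier_mat n n"
    and QP: "Q * P = 1\<^sub>m n" and AB: "A = P * B * Q"
    using A unfolding similar_mat_wit_def Let_def by auto
  have "(\<Sum>i<n. A $$ (i, i)) = (\<Sum>i<n. (P * (B * Q)) $$ (i, i))"
    using AB P B Q by (simp add: assoc_mult_mat)
  also have "\<dots> = (\<Sum>i<n. ((B * Q) * P) $$ (i, i))"
    using P B Q by (intro sum_diag_mult_comm) auto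
  also have "(B * Q) * P = B"
    using P B Q QP by (simp add: assoc_mult_mat)
  also have "(\<Sum>i<n. B $$ (i, i)) = sum_list as"
    using B unfolding diag[symmetric] diag_mat_def
    by (simp add: sum_set_upt_conv_sum_list_nat[symmetric] lessThan_atLeast0)
  finally show ?thesis ..
qed

lemma proots_prod_linear: "proots (\<Prod>a\<leftarrow>as. [:-a, 1:]) = mset (as :: complex list)"
proof (induction as)
  case (Cons a as)
  have "(\<Prod>a\<leftarrow>as. [:-a, 1::complex:]) \<noteq> 0"
    by (auto simp: prod_list_zero_iff)
  then have "proots ([:-a, 1:] * (\<Prod>a\<leftarrow>as. [:-a, 1:])) = proots [:-a, 1:] + mset as"
    by (subst proots_mult) (auto simp: Cons)
  then show ?case by simp
qed simp

lemma sum_list_map_two_valued: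
  fixes as :: "complex list" and h :: "complex \<Rightarrow> real"
  assumes vals: "\<forall>a\<in>set as. a = 0 \<or> a = c" and sum: "sum_list as = c" and h0: "h 0 = 0"
  shows "sum_list (map h as) = h c"
proof -
  have "sum_list (map h as) = real (count_list as c) * h c \<and> sum_list as = of_nat (count_list as c) * c"
    using vals h0 by (induction as) (auto simp: algebra_simps)
  then have hs: "sum_list (map h as) = real (count_list as c) * h c" and "c = of_nat (count_list as c) * c"
    using sum by auto
  show ?thesis
  proof (cases "c = 0")
    case False
    with \<open>c = of_nat (count_list as c) * c\<close> have "count_list as c = 1"
      by (metis mult_cancel_right1 of_nat_eq_1_iff)
    then show ?thesis using hs by simp
  qed (use hs h0 in simp)
qed

definition rank_one_mat :: "nat \<Rightarrow> (nat \<Rightarrow> complex) \<Rightarrow> complex mat" where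
  "rank_one_mat d g = mat d d (\<lambda>(i, j). g i * cnj (g j))"

lemma rank_one_mat_carrier [simp]: "rank_one_mat d g \<in> carrier_mat d d"
  by (simp add: rank_one_mat_def)

lemma rank_one_mat_eigenvalue:
  assumes root: "poly (char_poly (rank_one_mat d g)) a = 0" and a0: "a \<noteq> 0"
  shows "a = (\<Sum>i<d. g i * cnj (g i))"
proof -
  obtain v where "eigenvector (rank_one_mat d g) v a"
    using eigenvalue_root_char_poly[OF rank_one_mat_carrier[of d g]] root unfolding eigenvalue_def by auto
  then have v: "v \<in> carrier_vec d" "v \<noteq> 0\<^sub>v d" "rank_one_mat d g *\<^sub>v v = a \<cdot>\<^sub>v v"
    unfolding eigenvector_def by (auto simp: rank_one_mat_def)
  define s where "s = (\<Sum>j<d. cnj (g j) * v $ j)"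
  have v_eq: "v $ i = g i * s / a" if "i < d" for i
  proof -
    have "(rank_one_mat d g *\<^sub>v v) $ i = g i * s"
      using that v(1)
      by (simp add: rank_one_mat_def scalar_prod_def s_def sum_distrib_left ac_simps lessThan_atLeast0)
    then show ?thesis
      using v(3) that v(1) a0 by (simp add: field_simps)
  qed
  have "s \<noteq> 0"
  proof
    assume "s = 0"
    then have "v = 0\<^sub>v d" using v_eq v(1) by (intro eq_vecI) auto
    with v(2) show False ..
  qed
  have "s = (\<Sum>j<d. cnj (g j) * v $ j)"
    by (simp add: s_def)
  also have "\<dots> = (\<Sum>j<d. cnj (g j) * (g j * s / a))"
    by (rule sum.cong) (simp_all add: v_eq)
  also have "\<dots> = s / a * (\<Sum>j<d. g j * cnj (g j))"
    by (simp add: sum_distrib_left ac_simps)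
  finally have "s * a = s * (\<Sum>j<d. g j * cnj (g j))"
    using a0 by (simp add: field_simps)
  with \<open>s \<noteq> 0\<close> show ?thesis by simp
qed

text \<open>A rank-one matrix has the single nonzero eigenvalue \<open>\<Sum>i. \<bar>g i\<bar>\<^sup>2\<close>, with multiplicity one
  because the eigenvalues sum to the trace.\<close>

lemma spectral_sum_rank_one_mat:
  fixes h :: "complex \<Rightarrow> real"
  assumes h0: "h 0 = 0"
  shows "(\<Sum>l\<in>#proots (char_poly (rank_one_mat d g)). h l) = h (\<Sum>i<d. g i * cnj (g i))"
proof -
  obtain as where cp: "char_poly (rank_one_mat d g) = (\<Prod>a\<leftarrow>as. [:-a, 1:])"
    using char_poly_factorized[OF rank_one_mat_carrier] by blast
  have "\<forall>a\<in>set as. a = 0 \<or> a = (\<Sum>i<d. g i * cnj (g i))"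
  proof
    fix a assume "a \<in> set as"
    then have "poly (char_poly (rank_one_mat d g)) a = 0"
      unfolding cp by (induction as) (auto simp: poly_prod_list)
    then show "a = 0 \<or> a = (\<Sum>i<d. g i * cnj (g i))"
      using rank_one_mat_eigenvalue by blast
  qed
  moreover have "sum_list as = (\<Sum>i<d. g i * cnj (g i))"
    using sum_list_eigenvalues_eq_sum_diag[OF rank_one_mat_carrier cp]
    by (simp add: rank_one_mat_def)
  ultimately have "sum_list (map h as) = h (\<Sum>i<d. g i * cnj (g i))"
    using h0 by (rule sum_list_map_two_valued)
  then show ?thesis
    unfolding cp proots_prod_linear by (simp add: sum_mset_sum_list[symmetric])
qed

definition block_rank_one_mat :: "nat \<Rightarrow> nat \<Rightarrow> (nat \<Rightarrow> complex) \<Rightarrow> complex mat" where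
  "block_rank_one_mat n d f =
     mat (n * d) (n * d) (\<lambda>(i, j). if i div d = j div d then f i * cnj (f j) else 0)"

lemma block_rank_one_mat_carrier [simp]: "block_rank_one_mat n d f \<in> carrier_mat (n * d) (n * d)"
  by (simp add: block_rank_one_mat_def)

lemma div_eq_of_block:
  assumes "n * d \<le> j" and "j < n * d + d"
  shows "j div d = (n :: nat)"
proof -
  obtain r where "j = n * d + r" "r < d"
    using assms by (metis add_less_cancel_left le_Suc_ex)
  then show ?thesis by simp
qed

lemma block_rank_one_mat_Suc:
  "block_rank_one_mat (Suc n) d f =
     four_block_mat (block_rank_one_mat n d f) (0\<^sub>m (n * d) d) (0\<^sub>m d (n * d))
       (rank_one_mat d (\<lambda>i. f (n * d + i)))"
  (is "_ = ?M")
proof (rule eq_matI)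
  fix i j assume "i < dim_row ?M" and "j < dim_col ?M"
  then have i: "i < n * d + d" and j: "j < n * d + d"
    by (auto simp: block_rank_one_mat_def rank_one_mat_def)
  have div_lt: "k div d < n" if "k < n * d" for k
    using that by (metis less_mult_imp_div_less)
  have div_eq: "k div d = n" if "\<not> k < n * d" "k < n * d + d" for k
    using that by (intro div_eq_of_block) auto
  show "block_rank_one_mat (Suc n) d f $$ (i, j) = ?M $$ (i, j)"
    using i j div_lt[of i] div_lt[of j] div_eq[of i] div_eq[of j]
    by (cases "i < n * d"; cases "j < n * d") (simp_all add: block_rank_one_mat_def rank_one_mat_def algebra_simps)
qed (auto simp: block_rank_one_mat_def rank_one_mat_def algebra_simps)

lemma spectral_sum_block_rank_one_mat:
  fixes h :: "complex \<Rightarrow> real"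
  assumes h0: "h 0 = 0"
  shows "(\<Sum>l\<in>#proots (char_poly (block_rank_one_mat n d f)). h l) =
    (\<Sum>x<n. h (\<Sum>y<d. f (x * d + y) * cnj (f (x * d + y))))"
proof (induction n)
  case 0
  have "block_rank_one_mat 0 d f \<in> carrier_mat 0 0"
    using block_rank_one_mat_carrier[of 0 d f] by simp
  from char_poly_factorized[OF this]
  obtain as where "char_poly (block_rank_one_mat 0 d f) = (\<Prod>a\<leftarrow>as. [:-a, 1:])" and "length as = 0"
    by blast
  then show ?case by simp
next
  case (Suc n)
  let ?B = "block_rank_one_mat n d f" and ?R = "rank_one_mat d (\<lambda>i. f (n * d + i))"
  have nonzero: "char_poly A \<noteq> 0" if "A \<in> carrier_mat k k" for A :: "complex mat" and k
    using degree_monic_char_poly[OF that] by auto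
  have "char_poly (block_rank_one_mat (Suc n) d f) = char_poly ?B * char_poly ?R"
    unfolding block_rank_one_mat_Suc
    by (rule char_poly_0_block[OF refl _ _ block_rank_one_mat_carrier _ rank_one_mat_carrier])
      (use char_poly_factorized[OF block_rank_one_mat_carrier[of n d f]]
        char_poly_factorized[OF rank_one_mat_carrier[of d "\<lambda>i. f (n * d + i)"]] in auto)
  then have "proots (char_poly (block_rank_one_mat (Suc n) d f)) =
      proots (char_poly ?B) + proots (char_poly ?R)"
    using nonzero[OF block_rank_one_mat_carrier] nonzero[OF rank_one_mat_carrier]
    by (simp add: proots_mult)
  then show ?case
    using Suc spectral_sum_rank_one_mat[of h d "\<lambda>i. f (n * d + i)", OF h0]
    by (simp add: algebra_simps)
qed

lemma dephase_proj:
  assumes "\<psi> \<in> carrier_vec (dX * dY)"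
  shows "dephase dX dY (proj (dX * dY) \<psi>) = block_rank_one_mat dX dY (($) \<psi>)"
  unfolding dephase_def proj_def block_rank_one_mat_def by (rule eq_matI) auto

definition xlogx :: "real \<Rightarrow> real" where
  "xlogx t = t * log 2 t"

definition block_weight :: "nat \<Rightarrow> (nat \<Rightarrow> complex) \<Rightarrow> nat \<Rightarrow> real" where
  "block_weight dY f x = (\<Sum>y<dY. (cmod (f (x * dY + y)))\<^sup>2)"

lemma vN_entropy_dephase_proj:
  assumes "\<psi> \<in> carrier_vec (dX * dY)"
  shows "vN_entropy (dephase dX dY (proj (dX * dY) \<psi>)) =
    - (\<Sum>x<dX. xlogx (block_weight dY (($) \<psi>) x))"
proof -
  have "f * cnj f = complex_of_real ((cmod f)\<^sup>2)" for f
    by (rule complex_norm_square[symmetric])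
  then have "(\<Sum>y<dY. \<psi> $ (x * dY + y) * cnj (\<psi> $ (x * dY + y))) =
      complex_of_real (block_weight dY (($) \<psi>) x)" for x
    by (simp add: block_weight_def)
  then show ?thesis
    unfolding vN_entropy_def dephase_proj[OF assms]
    by (subst spectral_sum_block_rank_one_mat) (simp_all add: xlogx_def)
qed

section \<open>Shannon entropy of weights\<close>

lemma xlogx_0 [simp]: "xlogx 0 = 0"
  by (simp add: xlogx_def)

lemma xlogx_1 [simp]: "xlogx 1 = 0"
  by (simp add: xlogx_def)

lemma xlogx_mult:
  assumes "0 \<le> x" and "0 \<le> y"
  shows "xlogx (x * y) = x * xlogx y + y * xlogx x"
proof (cases "x = 0 \<or> y = 0")
  case False
  with assms have "0 < x" "0 < y" by auto
  then show ?thesis by (simp add: xlogx_def log_mult algebra_simps)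
qed auto

text \<open>The Shannon entropy, in bits, of the distribution \<open>q / (\<Sum>q)\<close>, multiplied by the total
  mass \<open>\<Sum>q\<close>: it equals \<open>-\<Sum>a. q a * log 2 (q a / \<Sum>q)\<close> and is positively homogeneous in \<open>q\<close>.\<close>

definition shannon_entropy :: "'a set \<Rightarrow> ('a \<Rightarrow> real) \<Rightarrow> real" where
  "shannon_entropy A q = xlogx (sum q A) - (\<Sum>a\<in>A. xlogx (q a))"

lemma shannon_entropy_scale:
  assumes c: "0 \<le> c" and q: "\<And>a. a \<in> A \<Longrightarrow> 0 \<le> q a"
  shows "shannon_entropy A (\<lambda>a. c * q a) = c * shannon_entropy A q"
proof -
  have "xlogx (\<Sum>a\<in>A. c * q a) = c * xlogx (sum q A) + sum q A * xlogx c"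
    using c q by (simp add: sum_distrib_left[symmetric] xlogx_mult sum_nonneg)
  moreover have "(\<Sum>a\<in>A. xlogx (c * q a)) = (\<Sum>a\<in>A. c * xlogx (q a) + q a * xlogx c)"
    using c q by (intro sum.cong) (simp_all add: xlogx_mult)
  ultimately show ?thesis
    unfolding shannon_entropy_def
    by (simp add: sum.distrib sum_distrib_left sum_distrib_right algebra_simps)
qed

lemma shannon_entropy_nonneg:
  assumes fin: "finite A" and q: "\<And>a. a \<in> A \<Longrightarrow> 0 \<le> q a"
  shows "0 \<le> shannon_entropy A q"
proof -
  have "xlogx (q a) \<le> q a * log 2 (sum q A)" if a: "a \<in> A" for a
  proof (cases "q a = 0")
    case False
    then have "0 < q a" using q[OF a] by simp
    moreover have "q a \<le> sum q A" using fin q a by (intro member_le_sum) auto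
    ultimately have "log 2 (q a) \<le> log 2 (sum q A)" by simp
    with \<open>0 < q a\<close> show ?thesis unfolding xlogx_def by (intro mult_left_mono) auto
  qed simp
  then have "(\<Sum>a\<in>A. xlogx (q a)) \<le> (\<Sum>a\<in>A. q a * log 2 (sum q A))"
    by (rule sum_mono)
  also have "\<dots> = xlogx (sum q A)"
    by (simp add: xlogx_def sum_distrib_right)
  finally show ?thesis
    unfolding shannon_entropy_def by simp
qed

lemma ln_ratio_lower_bound:
  fixes c b C B :: real
  assumes c: "0 \<le> c" and b: "0 \<le> b" and supp: "b = 0 \<Longrightarrow> c = 0" and C: "0 < C" and B: "0 < B"
  shows "c - b * C / B \<le> c * (ln c - ln b - ln C + ln B)"
proof (cases "c = 0")
  case True
  then show ?thesis using b C B by simp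
next
  case False
  with c b supp have c: "0 < c" and b: "0 < b" by (auto simp: le_less)
  have "ln (b * C / (c * B)) \<le> b * C / (c * B) - 1"
    using c b B C by (intro ln_le_minus_one) simp
  moreover have "ln (b * C / (c * B)) = ln b + ln C - ln c - ln B"
    using c b B C by (simp add: ln_div ln_mult)
  ultimately have "c * (ln b + ln C - ln c - ln B) \<le> c * (b * C / (c * B) - 1)"
    using c by (intro mult_left_mono) auto
  then show ?thesis using c by (simp add: field_simps)
qed

lemma log_sum_inequality:
  fixes c b :: "'j \<Rightarrow> real"
  assumes fin: "finite J" and c: "\<And>j. j \<in> J \<Longrightarrow> 0 \<le> c j" and b: "\<And>j. j \<in> J \<Longrightarrow> 0 \<le> b j"
    and supp: "\<And>j. j \<in> J \<Longrightarrow> b j = 0 \<Longrightarrow> c j = 0"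
  shows "xlogx (sum c J) - sum c J * log 2 (sum b J) \<le> (\<Sum>j\<in>J. xlogx (c j) - c j * log 2 (b j))"
proof (cases "sum c J = 0")
  case True
  then have "\<forall>j\<in>J. c j = 0" using sum_nonneg_eq_0_iff[OF fin] c by blast
  then show ?thesis using True by simp
next
  case False
  let ?C = "sum c J" and ?B = "sum b J"
  have C: "0 < ?C" using False sum_nonneg[of J c] c by fastforce
  then obtain j where j: "j \<in> J" "c j \<noteq> 0" using sum.neutral[of J c] by (metis less_irrefl)
  then have "0 < b j" using b supp by force
  moreover have "b j \<le> ?B" using fin b j by (intro member_le_sum) auto
  ultimately have B: "0 < ?B" by linarith
  have "0 = (\<Sum>j\<in>J. c j - b j * ?C / ?B)"
    using B by (simp add: sum_subtractf sum_divide_distrib[symmetric] sum_distrib_right[symmetric])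
  also have "\<dots> \<le> (\<Sum>j\<in>J. c j * (ln (c j) - ln (b j) - ln ?C + ln ?B))"
    using c b supp B C by (intro sum_mono ln_ratio_lower_bound) auto
  also have "\<dots> = (\<Sum>j\<in>J. c j * ln (c j) - c j * ln (b j)) - ?C * ln ?C + ?C * ln ?B"
    by (simp add: algebra_simps sum.distrib sum_subtractf sum_distrib_right[symmetric])
  finally have "?C * ln ?C - ?C * ln ?B \<le> (\<Sum>j\<in>J. c j * ln (c j) - c j * ln (b j))"
    by simp
  then have "(?C * ln ?C - ?C * ln ?B) / ln 2 \<le> (\<Sum>j\<in>J. c j * ln (c j) - c j * ln (b j)) / ln 2"
    by (intro divide_right_mono) auto
  then show ?thesis
    by (simp add: xlogx_def log_def sum_divide_distrib diff_divide_distrib)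
qed

lemma shannon_entropy_concave:
  fixes c :: "'j \<Rightarrow> 'a \<Rightarrow> real"
  assumes fJ: "finite J" and fA: "finite A" and c: "\<And>j a. j \<in> J \<Longrightarrow> a \<in> A \<Longrightarrow> 0 \<le> c j a"
  shows "(\<Sum>j\<in>J. shannon_entropy A (c j)) \<le> shannon_entropy A (\<lambda>a. \<Sum>j\<in>J. c j a)"
proof -
  define M where "M j = (\<Sum>a\<in>A. c j a)" for j
  have M: "0 \<le> M j" if "j \<in> J" for j
    unfolding M_def using c that by (simp add: sum_nonneg)
  have M0: "c j a = 0" if "j \<in> J" "a \<in> A" "M j = 0" for j a
    using that c fA unfolding M_def by (simp add: sum_nonneg_eq_0_iff)
  have "(\<Sum>a\<in>A. xlogx (\<Sum>j\<in>J. c j a) - (\<Sum>j\<in>J. c j a) * log 2 (sum M J))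
      \<le> (\<Sum>a\<in>A. \<Sum>j\<in>J. xlogx (c j a) - c j a * log 2 (M j))"
    using log_sum_inequality[OF fJ, of "\<lambda>j. c j _" M] c M M0 by (intro sum_mono) auto
  moreover have "(\<Sum>a\<in>A. (\<Sum>j\<in>J. c j a) * log 2 (sum M J)) = xlogx (sum M J)"
    unfolding xlogx_def M_def by (simp add: sum_distrib_right[symmetric] sum.swap[of _ A J])
  moreover have "(\<Sum>a\<in>A. \<Sum>j\<in>J. c j a * log 2 (M j)) = (\<Sum>j\<in>J. xlogx (M j))"
    unfolding xlogx_def M_def by (subst sum.swap) (simp add: sum_distrib_right[symmetric])
  ultimately show ?thesis
    unfolding shannon_entropy_def M_def
    by (simp add: sum_subtractf sum.swap[of _ A J] algebra_simps)
qed

lemma shannon_entropy_grouping: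
  "shannon_entropy (A \<times> B) q =
     shannon_entropy A (\<lambda>a. \<Sum>b\<in>B. q (a, b)) + (\<Sum>a\<in>A. shannon_entropy B (\<lambda>b. q (a, b)))"
  unfolding shannon_entropy_def sum.cartesian_product'
  by (simp add: sum_subtractf)

lemma shannon_entropy_product:
  assumes q1: "\<And>a. a \<in> A \<Longrightarrow> 0 \<le> q1 a" and q2: "\<And>b. b \<in> B \<Longrightarrow> 0 \<le> q2 b"
  shows "shannon_entropy (A \<times> B) (\<lambda>(a, b). q1 a * q2 b) =
    sum q2 B * shannon_entropy A q1 + sum q1 A * shannon_entropy B q2"
proof -
  have "shannon_entropy A (\<lambda>a. \<Sum>b\<in>B. q1 a * q2 b) = sum q2 B * shannon_entropy A q1"
    using shannon_entropy_scale[of "sum q2 B" A q1] q1 q2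
    by (simp add: sum_distrib_left[symmetric] sum_nonneg mult.commute)
  moreover have "(\<Sum>a\<in>A. shannon_entropy B (\<lambda>b. q1 a * q2 b)) = sum q1 A * shannon_entropy B q2"
    using shannon_entropy_scale[of _ B q2] q1 q2 by (simp add: sum_distrib_right)
  ultimately show ?thesis
    by (simp add: shannon_entropy_grouping)
qed

lemma shannon_entropy_lessThan_mult:
  fixes m n :: nat
  shows "shannon_entropy {..<m * n} q = shannon_entropy ({..<m} \<times> {..<n}) (\<lambda>(x, y). q (x * n + y))"
  unfolding shannon_entropy_def sum.cartesian_product' sum_lessThan_mult_nat by simp

text \<open>Chain rule for the right-hand side, then concavity for each of its two terms.\<close>

lemma shannon_entropy_marginals_le:
  fixes c :: "'a1 \<Rightarrow> 'a2 \<Rightarrow> 'b1 \<Rightarrow> 'b2 \<Rightarrow> real"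
  assumes fin: "finite A1" "finite A2" "finite B1" "finite B2"
    and c: "\<And>a1 a2 b1 b2. 0 \<le> c a1 a2 b1 b2"
  shows "(\<Sum>(a2, b2)\<in>A2 \<times> B2. shannon_entropy A1 (\<lambda>a1. \<Sum>b1\<in>B1. c a1 a2 b1 b2))
       + (\<Sum>(a1, b1)\<in>A1 \<times> B1. shannon_entropy A2 (\<lambda>a2. \<Sum>b2\<in>B2. c a1 a2 b1 b2))
       \<le> shannon_entropy (A1 \<times> A2) (\<lambda>(a1, a2). \<Sum>b1\<in>B1. \<Sum>b2\<in>B2. c a1 a2 b1 b2)"
proof -
  have first: "(\<Sum>(a2, b2)\<in>A2 \<times> B2. shannon_entropy A1 (\<lambda>a1. \<Sum>b1\<in>B1. c a1 a2 b1 b2))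
      \<le> shannon_entropy A1 (\<lambda>a1. \<Sum>a2\<in>A2. \<Sum>b1\<in>B1. \<Sum>b2\<in>B2. c a1 a2 b1 b2)"
  proof -
    have "(\<Sum>(a2, b2)\<in>A2 \<times> B2. shannon_entropy A1 (\<lambda>a1. \<Sum>b1\<in>B1. c a1 a2 b1 b2))
        \<le> shannon_entropy A1 (\<lambda>a1. \<Sum>(a2, b2)\<in>A2 \<times> B2. \<Sum>b1\<in>B1. c a1 a2 b1 b2)"
      using shannon_entropy_concave[of "A2 \<times> B2" A1 "\<lambda>(a2, b2) a1. \<Sum>b1\<in>B1. c a1 a2 b1 b2"] fin c
      by (simp add: case_prod_beta sum_nonneg)
    also have "(\<lambda>a1. \<Sum>(a2, b2)\<in>A2 \<times> B2. \<Sum>b1\<in>B1. c a1 a2 b1 b2) =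
        (\<lambda>a1. \<Sum>a2\<in>A2. \<Sum>b1\<in>B1. \<Sum>b2\<in>B2. c a1 a2 b1 b2)"
      by (simp add: sum.cartesian_product' sum.swap[of _ B1 B2])
    finally show ?thesis .
  qed
  have second: "(\<Sum>b1\<in>B1. shannon_entropy A2 (\<lambda>a2. \<Sum>b2\<in>B2. c a1 a2 b1 b2))
      \<le> shannon_entropy A2 (\<lambda>a2. \<Sum>b1\<in>B1. \<Sum>b2\<in>B2. c a1 a2 b1 b2)" for a1
    using shannon_entropy_concave[of B1 A2 "\<lambda>b1 a2. \<Sum>b2\<in>B2. c a1 a2 b1 b2"] fin c
    by (simp add: sum_nonneg)
  have "shannon_entropy (A1 \<times> A2) (\<lambda>(a1, a2). \<Sum>b1\<in>B1. \<Sum>b2\<in>B2. c a1 a2 b1 b2)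
      = shannon_entropy A1 (\<lambda>a1. \<Sum>a2\<in>A2. \<Sum>b1\<in>B1. \<Sum>b2\<in>B2. c a1 a2 b1 b2)
        + (\<Sum>a1\<in>A1. shannon_entropy A2 (\<lambda>a2. \<Sum>b1\<in>B1. \<Sum>b2\<in>B2. c a1 a2 b1 b2))"
    by (simp add: shannon_entropy_grouping)
  moreover have "(\<Sum>(a1, b1)\<in>A1 \<times> B1. shannon_entropy A2 (\<lambda>a2. \<Sum>b2\<in>B2. c a1 a2 b1 b2))
      \<le> (\<Sum>a1\<in>A1. shannon_entropy A2 (\<lambda>a2. \<Sum>b1\<in>B1. \<Sum>b2\<in>B2. c a1 a2 b1 b2))"
    using second by (simp add: sum.cartesian_product' sum_mono)
  ultimately show ?thesis
    using first by simp
qed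

section \<open>Positive semidefinite forms are sums of rank-one forms\<close>

definition quad_form :: "nat \<Rightarrow> (nat \<Rightarrow> nat \<Rightarrow> complex) \<Rightarrow> (nat \<Rightarrow> complex) \<Rightarrow> complex" where
  "quad_form n G v = (\<Sum>i<n. \<Sum>j<n. cnj (v i) * G i j * v j)"

definition psd_form :: "nat \<Rightarrow> (nat \<Rightarrow> nat \<Rightarrow> complex) \<Rightarrow> bool" where
  "psd_form n G \<longleftrightarrow> (\<forall>v. 0 \<le> Re (quad_form n G v))"

definition hermitian_form :: "nat \<Rightarrow> (nat \<Rightarrow> nat \<Rightarrow> complex) \<Rightarrow> bool" where
  "hermitian_form n G \<longleftrightarrow> (\<forall>i<n. \<forall>j<n. G j i = cnj (G i j))"

lemma sum_delta_mult:
  fixes f :: "nat \<Rightarrow> complex"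
  assumes "k < n"
  shows "(\<Sum>i<n. (if i = k then a else 0) * f i) = a * f k"
    and "(\<Sum>i<n. f i * (if i = k then a else 0)) = f k * a"
  using assms by (simp_all add: if_distrib[of "\<lambda>x. x * _"] if_distrib[of "\<lambda>x. _ * x"] sum.delta
    cong: if_cong)

lemma quad_form_add_unit:
  assumes k: "k < n"
  shows "quad_form n G (\<lambda>i. v i + (if i = k then t else 0)) =
    quad_form n G v + t * (\<Sum>i<n. cnj (v i) * G i k) + cnj t * (\<Sum>j<n. G k j * v j) + cnj t * t * G k k"
proof -
  let ?e = "\<lambda>i. if i = k then t else 0"
  have "quad_form n G (\<lambda>i. v i + ?e i) = quad_form n G v
      + (\<Sum>i<n. \<Sum>j<n. cnj (v i) * G i j * ?e j) + (\<Sum>i<n. \<Sum>j<n. cnj (?e i) * G i j * v j)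
      + (\<Sum>i<n. \<Sum>j<n. cnj (?e i) * G i j * ?e j)"
    unfolding quad_form_def by (simp add: distrib_left distrib_right sum.distrib)
  also have "(\<Sum>i<n. \<Sum>j<n. cnj (v i) * G i j * ?e j) = t * (\<Sum>i<n. cnj (v i) * G i k)"
    using k by (simp add: if_distrib[of "\<lambda>x. _ * x"] sum.delta sum_distrib_left ac_simps cong: if_cong)
  also have "(\<Sum>i<n. \<Sum>j<n. cnj (?e i) * G i j * v j) =
      (\<Sum>i<n. if i = k then (\<Sum>j<n. cnj t * G k j * v j) else 0)"
    by (rule sum.cong) auto
  also have "\<dots> = cnj t * (\<Sum>j<n. G k j * v j)"
    using k by (simp add: sum_distrib_left ac_simps)
  also have "(\<Sum>i<n. \<Sum>j<n. cnj (?e i) * G i j * ?e j) = (\<Sum>i<n. if i = k then cnj t * G k k * t else 0)"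
    using k by (intro sum.cong) (auto simp: if_distrib[of "\<lambda>x. _ * x"] sum.delta cong: if_cong)
  also have "\<dots> = cnj t * t * G k k"
    using k by simp
  finally show ?thesis .
qed

lemma quad_form_unit:
  assumes "k < n"
  shows "quad_form n G (\<lambda>i. if i = k then 1 else 0) = G k k"
  using quad_form_add_unit[OF assms, of G "\<lambda>_. 0" 1] by (simp add: quad_form_def)

lemma psd_form_diag_nonneg:
  assumes "psd_form n G" and "k < n"
  shows "0 \<le> Re (G k k)"
  using assms quad_form_unit[of k n G] unfolding psd_form_def by metis

lemma psd_form_diag_zero:
  assumes h: "hermitian_form n G" and p: "psd_form n G" and k: "k < n" and j: "j < n"
    and z: "G k k = 0"
  shows "G k j = 0"
proof (rule ccontr)
  assume nz: "G k j \<noteq> 0"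
  let ?g = "G k j" and ?v = "\<lambda>i. (if i = j then 1 else 0) :: complex"
  define s where "s = (\<bar>Re (G j j)\<bar> + 1) / (cmod ?g)\<^sup>2"
  define t where "t = - complex_of_real s * ?g"
  have "(\<Sum>i<n. G k i * ?v i) = ?g"
    using sum_delta_mult(2)[OF j] by simp
  moreover have "(\<Sum>i<n. cnj (?v i) * G i k) = G j k"
    using sum_delta_mult(1)[OF j, of 1] by (simp add: if_distrib[of cnj] cong: if_cong)
  moreover have "G j k = cnj ?g"
    using h j k unfolding hermitian_form_def by blast
  ultimately have "quad_form n G (\<lambda>i. ?v i + (if i = k then t else 0)) = G j j + cnj t * ?g + t * cnj ?g"
    using quad_form_add_unit[OF k, of G ?v t] quad_form_unit[OF j] z by simp
  also have "\<dots> = G j j - 2 * of_real (s * (cmod ?g)\<^sup>2)"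
    by (simp add: t_def complex_norm_square[symmetric])
  finally have "Re (quad_form n G (\<lambda>i. ?v i + (if i = k then t else 0))) = Re (G j j) - 2 * (\<bar>Re (G j j)\<bar> + 1)"
    using nz by (simp add: s_def)
  moreover have "0 \<le> Re (quad_form n G (\<lambda>i. ?v i + (if i = k then t else 0)))"
    using p unfolding psd_form_def by blast
  ultimately have "0 \<le> Re (G j j) - 2 * (\<bar>Re (G j j)\<bar> + 1)"
    by simp
  then show False by (smt (verit) abs_ge_self)
qed

text \<open>One step of Gaussian elimination; with the convention \<open>x / 0 = 0\<close> it leaves \<open>G\<close> unchanged
  when the pivot \<open>G k k\<close> vanishes.\<close>

definition schur_complement :: "(nat \<Rightarrow> nat \<Rightarrow> complex) \<Rightarrow> nat \<Rightarrow> nat \<Rightarrow> nat \<Rightarrow> complex" where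
  "schur_complement G k i j = G i j - G i k * G k j / G k k"

lemma hermitian_form_schur_complement:
  assumes h: "hermitian_form n G" and k: "k < n"
  shows "hermitian_form n (schur_complement G k)"
  unfolding hermitian_form_def
proof (intro allI impI)
  fix i j assume "i < n" "j < n"
  then have "G j i = cnj (G i j)" "G k i = cnj (G i k)" "G j k = cnj (G k j)" "G k k = cnj (G k k)"
    using h k unfolding hermitian_form_def by blast+
  then show "schur_complement G k j i = cnj (schur_complement G k i j)"
    unfolding schur_complement_def by (simp add: ac_simps)
qed

lemma hermitian_form_column_sum:
  assumes "hermitian_form n G" and "k < n"
  shows "(\<Sum>i<n. cnj (v i) * G i k) = cnj (\<Sum>j<n. G k j * v j)"
  unfolding cnj_sum
proof (rule sum.cong)
  fix i assume "i \<in> {..<n}"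
  then have "G i k = cnj (G k i)" using assms unfolding hermitian_form_def by blast
  then show "cnj (v i) * G i k = cnj (G k i * v i)" by simp
qed simp

lemma quad_form_schur_complement:
  fixes v :: "nat \<Rightarrow> complex"
  assumes h: "hermitian_form n G" and k: "k < n"
  defines "b \<equiv> \<Sum>j<n. G k j * v j"
  shows "quad_form n (schur_complement G k) v = quad_form n G v - cnj b * b / G k k"
proof -
  have cb: "(\<Sum>i<n. cnj (v i) * G i k) = cnj b"
    unfolding b_def by (rule hermitian_form_column_sum[OF h k])
  have "quad_form n (schur_complement G k) v =
      (\<Sum>i<n. \<Sum>j<n. cnj (v i) * G i j * v j - (cnj (v i) * G i k) * (G k j * v j) / G k k)"
    unfolding quad_form_def schur_complement_def by (intro sum.cong refl) (simp add: algebra_simps)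
  also have "\<dots> = quad_form n G v - (\<Sum>i<n. \<Sum>j<n. (cnj (v i) * G i k) * (G k j * v j)) / G k k"
    unfolding quad_form_def by (simp only: sum_subtractf sum_divide_distrib)
  also have "(\<Sum>i<n. \<Sum>j<n. (cnj (v i) * G i k) * (G k j * v j)) = cnj b * b"
    by (simp add: sum_product[symmetric] cb b_def)
  finally show ?thesis .
qed

lemma psd_form_schur_complement:
  assumes h: "hermitian_form n G" and p: "psd_form n G" and k: "k < n"
  shows "psd_form n (schur_complement G k)"
  unfolding psd_form_def
proof
  fix v
  let ?a = "G k k"
  define b where "b = (\<Sum>j<n. G k j * v j)"
  have cb: "(\<Sum>i<n. cnj (v i) * G i k) = cnj b"
    unfolding b_def by (rule hermitian_form_column_sum[OF h k])
  have ca: "cnj ?a = ?a" using h k unfolding hermitian_form_def by (metis complex_cnj_cnj)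
  have "quad_form n (schur_complement G k) v = quad_form n G v - cnj b * b / ?a"
    unfolding b_def by (rule quad_form_schur_complement[OF h k])
  also have "\<dots> = quad_form n G (\<lambda>i. v i + (if i = k then - b / ?a else 0))"
  proof (cases "?a = 0")
    case False
    have "quad_form n G (\<lambda>i. v i + (if i = k then - b / ?a else 0)) =
        quad_form n G v + cnj (- b / ?a) * b + (- b / ?a) * cnj b + cnj (- b / ?a) * (- b / ?a) * ?a"
      using quad_form_add_unit[OF k, of G v "- b / ?a"] cb unfolding b_def by simp
    also have "\<dots> = quad_form n G v - cnj b * b / ?a"
      using False ca by (simp add: field_simps)
    finally show ?thesis ..
  qed (simp cong: if_cong)
  finally show "0 \<le> Re (quad_form n (schur_complement G k) v)"
    using p unfolding psd_form_def by simp
qed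

lemma schur_complement_pivot_zero:
  assumes h: "hermitian_form n G" and p: "psd_form n G" and k: "k < n" and j: "j < n"
  shows "schur_complement G k k j = 0" and "schur_complement G k j k = 0"
proof -
  have "G j k = cnj (G k j)" using h j k unfolding hermitian_form_def by blast
  then show "schur_complement G k k j = 0" "schur_complement G k j k = 0"
    using psd_form_diag_zero[OF h p k j]
    by (cases "G k k = 0"; simp add: schur_complement_def)+
qed

lemma schur_complement_rank_one:
  assumes h: "hermitian_form n G" and p: "psd_form n G" and k: "k < n" and j: "j < n"
  defines "u \<equiv> \<lambda>i. G i k / of_real (sqrt (Re (G k k)))"
  shows "G i j = schur_complement G k i j + u i * cnj (u j)"
proof -
  have "G k k = cnj (G k k)" and "G k j = cnj (G j k)"
    using h j k unfolding hermitian_form_def by blast+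
  then have real: "G k k = of_real (Re (G k k))" and kj: "cnj (G j k) = G k j"
    by (simp_all add: complex_eq_iff)
  have "of_real (sqrt (Re (G k k))) * of_real (sqrt (Re (G k k))) = G k k"
    using psd_form_diag_nonneg[OF p k] real
    by (simp add: of_real_mult[symmetric] del: of_real_mult)
  then have "u i * cnj (u j) = G i k * G k j / G k k"
    unfolding u_def by (simp add: kj)
  then show ?thesis
    unfolding schur_complement_def by simp
qed

lemma psd_form_partial_decomposition:
  assumes h: "hermitian_form n F" and p: "psd_form n F"
  shows "k \<le> n \<Longrightarrow> \<exists>R w. hermitian_form n R \<and> psd_form n R
    \<and> (\<forall>i<k. \<forall>j<n. R i j = 0 \<and> R j i = 0)
    \<and> (\<forall>i<n. \<forall>j<n. F i j = R i j + (\<Sum>l<k. w l i * cnj (w l j)))"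
proof (induction k)
  case 0
  show ?case using h p by auto
next
  case (Suc k)
  then obtain R w where hR: "hermitian_form n R" and pR: "psd_form n R"
    and zero: "\<forall>i<k. \<forall>j<n. R i j = 0 \<and> R j i = 0"
    and F: "\<forall>i<n. \<forall>j<n. F i j = R i j + (\<Sum>l<k. w l i * cnj (w l j))"
    by auto
  have k: "k < n" using Suc.prems by simp
  define u where "u i = R i k / of_real (sqrt (Re (R k k)))" for i
  let ?R = "schur_complement R k"
  have "\<forall>i<Suc k. \<forall>j<n. ?R i j = 0 \<and> ?R j i = 0"
  proof (intro allI impI)
    fix i j assume "i < Suc k" "j < n"
    then consider "i = k" | "i < k" by linarith
    then show "?R i j = 0 \<and> ?R j i = 0"
    proof cases
      case 2
      then show ?thesis using zero k \<open>j < n\<close> by (simp add: schur_complement_def)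
    qed (use schur_complement_pivot_zero[OF hR pR k \<open>j < n\<close>] in simp)
  qed
  moreover have "\<forall>i<n. \<forall>j<n. F i j = ?R i j + (\<Sum>l<Suc k. (w(k := u)) l i * cnj ((w(k := u)) l j))"
    using F schur_complement_rank_one[OF hR pR k] by (simp add: u_def)
  ultimately show ?case
    using hermitian_form_schur_complement[OF hR k] psd_form_schur_complement[OF hR pR k] by blast
qed

lemma psd_form_decomposition:
  assumes "hermitian_form n F" and "psd_form n F"
  obtains w where "\<And>i j. i < n \<Longrightarrow> j < n \<Longrightarrow> F i j = (\<Sum>l<n. w l i * cnj (w l j))"
  using psd_form_partial_decomposition[OF assms order.refl] by force

lemma block_weight_nonneg: "0 \<le> block_weight dY f x"
  by (simp add: block_weight_def sum_nonneg)

lemma sum_block_weight: "(\<Sum>x<dX. block_weight dY f x) = (\<Sum>i<dX * dY. (cmod (f i))\<^sup>2)"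
  by (simp add: block_weight_def sum_lessThan_mult_nat)

lemma block_weight_scale: "block_weight dY (\<lambda>i. c * f i) x = (cmod c)\<^sup>2 * block_weight dY f x"
  by (simp add: block_weight_def norm_mult power_mult_distrib sum_distrib_left)

text \<open>For \<open>f = \<surd>p \<psi>\<close> with \<open>\<psi>\<close> a unit vector, this is the contribution \<open>p S(\<Delta>(|\<psi>\<rangle>\<langle>\<psi>|))\<close> of the
  term \<open>p |\<psi>\<rangle>\<langle>\<psi>|\<close> of a pure-state decomposition.\<close>

definition pure_coh :: "nat \<Rightarrow> nat \<Rightarrow> (nat \<Rightarrow> complex) \<Rightarrow> real" where
  "pure_coh dX dY f = shannon_entropy {..<dX} (block_weight dY f)"

lemma pure_coh_nonneg: "0 \<le> pure_coh dX dY f"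
  unfolding pure_coh_def by (rule shannon_entropy_nonneg) (simp_all add: block_weight_nonneg)

lemma pure_coh_cong:
  assumes "\<And>i. i < dX * dY \<Longrightarrow> f i = g i"
  shows "pure_coh dX dY f = pure_coh dX dY g"
proof -
  have "block_weight dY f x = block_weight dY g x" if "x < dX" for x
    unfolding block_weight_def using assms that mult_add_less_mult by (intro sum.cong) auto
  then show ?thesis
    unfolding pure_coh_def shannon_entropy_def by simp
qed

lemma pure_coh_eq_entropy_dephase_proj:
  assumes \<psi>: "\<psi> \<in> carrier_vec (dX * dY)" and unit: "(\<Sum>i<dX * dY. (cmod (\<psi> $ i))\<^sup>2) = 1"
    and p: "0 \<le> p"
  shows "pure_coh dX dY (\<lambda>i. of_real (sqrt p) * \<psi> $ i) =
    p * vN_entropy (dephase dX dY (proj (dX * dY) \<psi>))"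
proof -
  let ?q = "block_weight dY (($) \<psi>)"
  have "sum ?q {..<dX} = 1"
    using unit by (simp add: sum_block_weight)
  then have "vN_entropy (dephase dX dY (proj (dX * dY) \<psi>)) = shannon_entropy {..<dX} ?q"
    by (simp add: vN_entropy_dephase_proj[OF \<psi>] shannon_entropy_def)
  moreover have "block_weight dY (\<lambda>i. of_real (sqrt p) * \<psi> $ i) = (\<lambda>x. p * ?q x)"
    using p by (intro ext) (simp add: block_weight_scale)
  ultimately show ?thesis
    unfolding pure_coh_def using p by (simp add: shannon_entropy_scale block_weight_nonneg)
qed

lemma of_real_mult_outer:
  assumes "0 \<le> p"
  shows "complex_of_real p * (a * cnj b) = (of_real (sqrt p) * a) * cnj (of_real (sqrt p) * b)"
proof -
  have "complex_of_real (sqrt p) * complex_of_real (sqrt p) = complex_of_real p"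
    using assms by (simp add: of_real_mult[symmetric] del: of_real_mult)
  then show ?thesis
    by (metis (no_types, lifting) complex_cnj_complex_of_real complex_cnj_mult mult.assoc mult.left_commute)
qed

definition coh_values :: "nat \<Rightarrow> nat \<Rightarrow> complex mat \<Rightarrow> real set" where
  "coh_values dX dY \<rho> = {(\<Sum>k<m. p k * vN_entropy (dephase dX dY (proj (dX * dY) (\<psi> k)))) | m p \<psi>.
     pure_decomp (dX * dY) \<rho> m p \<psi>}"

lemma coh_form_eq_Inf: "coh_form dX dY \<rho> = Inf (coh_values dX dY \<rho>)"
  by (simp add: coh_form_def coh_values_def)

lemma coh_values_elim:
  assumes "v \<in> coh_values dX dY \<sigma>"
  obtains m :: nat and u where "v = (\<Sum>k<m. pure_coh dX dY (u k))"
    and "\<And>i j. i < dX * dY \<Longrightarrow> j < dX * dY \<Longrightarrow> \<sigma> $$ (i, j) = (\<Sum>k<m. u k i * cnj (u k j))"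
proof -
  obtain m p \<psi> where pd: "pure_decomp (dX * dY) \<sigma> m p \<psi>"
    and v: "v = (\<Sum>k<m. p k * vN_entropy (dephase dX dY (proj (dX * dY) (\<psi> k))))"
    using assms unfolding coh_values_def by blast
  define u where "u k i = of_real (sqrt (p k)) * \<psi> k $ i" for k i
  have "v = (\<Sum>k<m. pure_coh dX dY (u k))"
    unfolding v u_def using pd
    by (intro sum.cong) (simp_all add: pure_decomp_def pure_coh_eq_entropy_dephase_proj)
  moreover have "\<sigma> $$ (i, j) = (\<Sum>k<m. u k i * cnj (u k j))" if "i < dX * dY" "j < dX * dY" for i j
    using pd that unfolding pure_decomp_def u_def by (simp add: of_real_mult_outer)
  ultimately show ?thesis
    using that by blast
qed

lemma coh_values_nonneg:
  assumes "v \<in> coh_values dX dY \<sigma>"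
  shows "0 \<le> v"
  using assms by (rule coh_values_elim) (simp add: sum_nonneg pure_coh_nonneg)

lemma bdd_below_coh_values: "bdd_below (coh_values dX dY \<sigma>)"
  by (rule bdd_belowI[of _ 0]) (rule coh_values_nonneg)

lemma exists_unit_vec_rescaling:
  assumes "0 < n"
  obtains \<psi> where "\<psi> \<in> carrier_vec n" and "(\<Sum>i<n. (cmod (\<psi> $ i))\<^sup>2) = 1"
    and "\<And>i. i < n \<Longrightarrow> of_real (sqrt (\<Sum>i<n. (cmod (w i))\<^sup>2)) * \<psi> $ i = w i"
proof (cases "(\<Sum>i<n. (cmod (w i))\<^sup>2) = 0")
  case True
  then have "w i = 0" if "i < n" for i
    using that by (simp add: sum_nonneg_eq_0_iff)
  moreover have "(\<Sum>i<n. (cmod (unit_vec n 0 $ i))\<^sup>2) = 1"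
    using assms by (simp add: unit_vec_def if_distrib[of cmod] if_distrib[of power2] cong: if_cong)
  ultimately show ?thesis
    using that[of "unit_vec n 0"] True by simp
next
  case False
  let ?s = "sqrt (\<Sum>i<n. (cmod (w i))\<^sup>2)"
  have s: "0 < ?s" using False by (simp add: sum_nonneg less_le)
  have "(\<Sum>i<n. (cmod (w i / of_real ?s))\<^sup>2) = (\<Sum>i<n. (cmod (w i))\<^sup>2) / ?s\<^sup>2"
    by (simp add: norm_divide power_divide sum_divide_distrib)
  also have "\<dots> = 1"
    using False by (simp add: sum_nonneg)
  finally show ?thesis
    using that[of "vec n (\<lambda>i. w i / of_real ?s)"] s by simp
qed

lemma trace_eq_sum_sq_norms:
  fixes w :: "'j \<Rightarrow> nat \<Rightarrow> complex"
  assumes "\<And>i. i < n \<Longrightarrow> \<sigma> $$ (i, i) = (\<Sum>t\<in>J. w t i * cnj (w t i))"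
  shows "(\<Sum>i<n. \<sigma> $$ (i, i)) = of_real (\<Sum>t\<in>J. \<Sum>i<n. (cmod (w t i))\<^sup>2)"
  unfolding of_real_sum complex_norm_square using assms by (subst sum.swap) simp

lemma sum_sq_norms_eq_1:
  fixes w :: "'j \<Rightarrow> nat \<Rightarrow> complex"
  assumes "\<And>i j. i < n \<Longrightarrow> j < n \<Longrightarrow> \<sigma> $$ (i, j) = (\<Sum>t\<in>J. w t i * cnj (w t j))"
    and "(\<Sum>i<n. \<sigma> $$ (i, i)) = 1"
  shows "(\<Sum>t\<in>J. \<Sum>i<n. (cmod (w t i))\<^sup>2) = 1"
proof -
  have "(\<Sum>i<n. \<sigma> $$ (i, i)) = of_real (\<Sum>t\<in>J. \<Sum>i<n. (cmod (w t i))\<^sup>2)"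
    by (rule trace_eq_sum_sq_norms) (rule assms(1); simp)
  then have "complex_of_real (\<Sum>t\<in>J. \<Sum>i<n. (cmod (w t i))\<^sup>2) = 1"
    using assms(2) by (simp only:)
  then show ?thesis
    by (simp only: of_real_eq_1_iff)
qed

lemma pure_coh_sum_in_coh_values:
  fixes w :: "nat \<Rightarrow> nat \<Rightarrow> complex"
  assumes N: "0 < dX * dY" and \<sigma>: "\<sigma> \<in> carrier_mat (dX * dY) (dX * dY)"
    and entries: "\<And>i j. i < dX * dY \<Longrightarrow> j < dX * dY \<Longrightarrow> \<sigma> $$ (i, j) = (\<Sum>k<m. w k i * cnj (w k j))"
    and trace: "(\<Sum>i<dX * dY. \<sigma> $$ (i, i)) = 1"
  shows "(\<Sum>k<m. pure_coh dX dY (w k)) \<in> coh_values dX dY \<sigma>"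
proof -
  let ?N = "dX * dY"
  define P where "P k = (\<Sum>i<?N. (cmod (w k i))\<^sup>2)" for k
  have P: "0 \<le> P k" for k
    by (simp add: P_def sum_nonneg)
  have "\<forall>k. \<exists>\<psi>. \<psi> \<in> carrier_vec ?N \<and> (\<Sum>i<?N. (cmod (\<psi> $ i))\<^sup>2) = 1
      \<and> (\<forall>i<?N. of_real (sqrt (P k)) * \<psi> $ i = w k i)"
    using exists_unit_vec_rescaling[OF N] unfolding P_def by metis
  then obtain \<psi> where \<psi>: "\<And>k. \<psi> k \<in> carrier_vec ?N" "\<And>k. (\<Sum>i<?N. (cmod (\<psi> k $ i))\<^sup>2) = 1"
    and rescale: "\<And>k i. i < ?N \<Longrightarrow> of_real (sqrt (P k)) * \<psi> k $ i = w k i"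
    by metis
  have "of_real (P k) * (\<psi> k $ i * cnj (\<psi> k $ j)) = w k i * cnj (w k j)" if "i < ?N" "j < ?N" for k i j
    using of_real_mult_outer[OF P, of k "\<psi> k $ i" "\<psi> k $ j"] rescale that by simp
  then have "\<sigma> = mat ?N ?N (\<lambda>(i, j). \<Sum>k<m. of_real (P k) * (\<psi> k $ i * cnj (\<psi> k $ j)))"
    using \<sigma> by (intro eq_matI) (simp_all add: entries)
  moreover have "(\<Sum>k<m. P k) = 1"
    unfolding P_def by (rule sum_sq_norms_eq_1[OF entries trace])
  ultimately have "pure_decomp ?N \<sigma> m P \<psi>"
    unfolding pure_decomp_def using P \<psi> by blast
  moreover have "P k * vN_entropy (dephase dX dY (proj ?N (\<psi> k))) = pure_coh dX dY (w k)" for k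
  proof -
    have "pure_coh dX dY (\<lambda>i. of_real (sqrt (P k)) * \<psi> k $ i) = pure_coh dX dY (w k)"
      by (rule pure_coh_cong) (rule rescale)
    then show ?thesis
      using pure_coh_eq_entropy_dephase_proj[OF \<psi>(1,2) P] by simp
  qed
  ultimately show ?thesis
    unfolding coh_values_def by (intro CollectI exI[of _ m] exI[of _ P] exI[of _ \<psi>]) simp
qed

lemma pure_coh_family_in_coh_values:
  fixes w :: "'j \<Rightarrow> nat \<Rightarrow> complex"
  assumes N: "0 < dX * dY" and fin: "finite J" and \<sigma>: "\<sigma> \<in> carrier_mat (dX * dY) (dX * dY)"
    and entries: "\<And>i j. i < dX * dY \<Longrightarrow> j < dX * dY \<Longrightarrow> \<sigma> $$ (i, j) = (\<Sum>t\<in>J. w t i * cnj (w t j))"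
    and trace: "(\<Sum>i<dX * dY. \<sigma> $$ (i, i)) = 1"
  shows "(\<Sum>t\<in>J. pure_coh dX dY (w t)) \<in> coh_values dX dY \<sigma>"
proof -
  obtain h where h: "bij_betw h {..<card J} J"
    using ex_bij_betw_nat_finite[OF fin] by (auto simp: lessThan_atLeast0)
  have reindex: "(\<Sum>t\<in>J. g t) = (\<Sum>k<card J. g (h k))" for g :: "'j \<Rightarrow> 'b::comm_monoid_add"
    using sum.reindex_bij_betw[OF h, of g] by simp
  have "(\<Sum>k<card J. pure_coh dX dY (w (h k))) \<in> coh_values dX dY \<sigma>"
    by (rule pure_coh_sum_in_coh_values[OF N \<sigma> _ trace]) (simp add: entries reindex)
  then show ?thesis
    by (simp add: reindex)
qed

lemma coh_form_le_pure_coh_family: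
  fixes w :: "'j \<Rightarrow> nat \<Rightarrow> complex"
  assumes "0 < dX * dY" and "finite J" and "\<sigma> \<in> carrier_mat (dX * dY) (dX * dY)"
    and "\<And>i j. i < dX * dY \<Longrightarrow> j < dX * dY \<Longrightarrow> \<sigma> $$ (i, j) = (\<Sum>t\<in>J. w t i * cnj (w t j))"
    and "(\<Sum>i<dX * dY. \<sigma> $$ (i, i)) = 1"
  shows "coh_form dX dY \<sigma> \<le> (\<Sum>t\<in>J. pure_coh dX dY (w t))"
  unfolding coh_form_eq_Inf
  by (rule cInf_lower[OF pure_coh_family_in_coh_values[OF assms] bdd_below_coh_values])

lemma mat_adjoint_index:
  assumes "A \<in> carrier_mat n n" and "i < n" and "j < n"
  shows "mat_adjoint A $$ (i, j) = cnj (A $$ (j, i))"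
  using assms unfolding mat_adjoint_def by (simp add: mat_of_rows_def cols_def)

lemma coh_values_nonempty:
  assumes N: "0 < dX * dY" and st: "is_state (dX * dY) \<rho>"
  shows "coh_values dX dY \<rho> \<noteq> {}"
proof -
  let ?N = "dX * dY" and ?F = "\<lambda>i j. \<rho> $$ (i, j)"
  have \<rho>: "\<rho> \<in> carrier_mat ?N ?N" and adj: "mat_adjoint \<rho> = \<rho>"
    and psd: "\<And>v. v \<in> carrier_vec ?N \<Longrightarrow> 0 \<le> Re (conjugate v \<bullet> (\<rho> *\<^sub>v v))"
    and trace: "(\<Sum>i<?N. \<rho> $$ (i, i)) = 1"
    using st unfolding is_state_def by auto
  have herm_F: "hermitian_form ?N ?F"
    unfolding hermitian_form_def using mat_adjoint_index[OF \<rho>] adj by metis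
  have psd_F: "psd_form ?N ?F"
    unfolding psd_form_def
  proof
    fix v :: "nat \<Rightarrow> complex"
    have "conjugate (vec ?N v) \<bullet> (\<rho> *\<^sub>v vec ?N v) = quad_form ?N ?F v"
      using \<rho> unfolding quad_form_def
      by (simp add: scalar_prod_def lessThan_atLeast0 sum_distrib_left ac_simps)
    then show "0 \<le> Re (quad_form ?N ?F v)"
      using psd[of "vec ?N v"] by simp
  qed
  obtain w where "\<And>i j. i < ?N \<Longrightarrow> j < ?N \<Longrightarrow> ?F i j = (\<Sum>l<?N. w l i * cnj (w l j))"
    using psd_form_decomposition[OF herm_F psd_F] by blast
  then have "(\<Sum>l<?N. pure_coh dX dY (w l)) \<in> coh_values dX dY \<rho>"
    using pure_coh_family_in_coh_values[OF N _ \<rho> _ trace] by blast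
  then show ?thesis by blast
qed

section \<open>Tensor products\<close>

definition tensor_index :: "nat \<Rightarrow> nat \<Rightarrow> nat \<Rightarrow> nat \<Rightarrow> nat \<Rightarrow> nat \<Rightarrow> nat \<Rightarrow> nat" where
  "tensor_index dA2 dB1 dB2 a1 a2 b1 b2 = (a1 * dA2 + a2) * (dB1 * dB2) + (b1 * dB2 + b2)"

lemma tensor_index_less:
  assumes "a1 < dA1" "a2 < dA2" "b1 < dB1" "b2 < dB2"
  shows "tensor_index dA2 dB1 dB2 a1 a2 b1 b2 < (dA1 * dA2) * (dB1 * dB2)"
  unfolding tensor_index_def using assms by (intro mult_add_less_mult) auto

lemma tensor_index_decode:
  fixes a1 a2 b1 b2 dA2 dB1 dB2 :: nat
  assumes "a2 < dA2" "b1 < dB1" "b2 < dB2"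
  defines "i \<equiv> tensor_index dA2 dB1 dB2 a1 a2 b1 b2"
  shows "(i div (dB1 * dB2)) div dA2 = a1" "(i div (dB1 * dB2)) mod dA2 = a2"
    and "(i mod (dB1 * dB2)) div dB2 = b1" "(i mod (dB1 * dB2)) mod dB2 = b2"
proof -
  have "b1 * dB2 + b2 < dB1 * dB2" using assms by (intro mult_add_less_mult)
  moreover have "0 < dB1 * dB2" using assms by simp
  ultimately have "i div (dB1 * dB2) = a1 * dA2 + a2" "i mod (dB1 * dB2) = b1 * dB2 + b2"
    unfolding i_def tensor_index_def by simp_all
  then show "(i div (dB1 * dB2)) div dA2 = a1" "(i div (dB1 * dB2)) mod dA2 = a2"
    "(i mod (dB1 * dB2)) div dB2 = b1" "(i mod (dB1 * dB2)) mod dB2 = b2"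
    using assms by simp_all
qed

lemma sum_tensor_index:
  "(\<Sum>i<(dA1 * dA2) * (dB1 * dB2). g i) =
    (\<Sum>a1<dA1. \<Sum>a2<dA2. \<Sum>b1<dB1. \<Sum>b2<dB2. g (tensor_index dA2 dB1 dB2 a1 a2 b1 b2))"
  by (simp add: sum_lessThan_mult_nat tensor_index_def)

lemma tensor_reorder_carrier:
  "tensor_reorder dA1 dB1 dA2 dB2 \<rho>1 \<rho>2 \<in> carrier_mat ((dA1 * dA2) * (dB1 * dB2)) ((dA1 * dA2) * (dB1 * dB2))"
  unfolding tensor_reorder_def Let_def by simp

text \<open>The indices, in \<open>A\<^sub>1B\<^sub>1\<close> and in \<open>A\<^sub>2B\<^sub>2\<close>, of the two factors of a basis vector of
  \<open>(A\<^sub>1A\<^sub>2)(B\<^sub>1B\<^sub>2)\<close>, as used in \<^const>\<open>tensor_reorder\<close>.\<close>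

definition split_index_1 :: "nat \<Rightarrow> nat \<Rightarrow> nat \<Rightarrow> nat \<Rightarrow> nat" where
  "split_index_1 dA2 dB1 dB2 i = (i div (dB1 * dB2)) div dA2 * dB1 + (i mod (dB1 * dB2)) div dB2"

definition split_index_2 :: "nat \<Rightarrow> nat \<Rightarrow> nat \<Rightarrow> nat \<Rightarrow> nat" where
  "split_index_2 dA2 dB1 dB2 i = (i div (dB1 * dB2)) mod dA2 * dB2 + (i mod (dB1 * dB2)) mod dB2"

lemma tensor_reorder_entry:
  assumes "i < (dA1 * dA2) * (dB1 * dB2)" and "j < (dA1 * dA2) * (dB1 * dB2)"
  shows "tensor_reorder dA1 dB1 dA2 dB2 \<rho>1 \<rho>2 $$ (i, j) =
    \<rho>1 $$ (split_index_1 dA2 dB1 dB2 i, split_index_1 dA2 dB1 dB2 j) *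
    \<rho>2 $$ (split_index_2 dA2 dB1 dB2 i, split_index_2 dA2 dB1 dB2 j)"
  using assms unfolding tensor_reorder_def Let_def split_index_1_def split_index_2_def by simp

lemma split_index_less:
  assumes i: "i < (dA1 * dA2) * (dB1 * dB2)"
  shows "split_index_1 dA2 dB1 dB2 i < dA1 * dB1" and "split_index_2 dA2 dB1 dB2 i < dA2 * dB2"
proof -
  have pos: "0 < dA2" "0 < dB2" "0 < dB1 * dB2"
    using i by (cases "dA2 = 0 \<or> dB1 = 0 \<or> dB2 = 0"; auto)+
  then have "i div (dB1 * dB2) div dA2 < dA1" "i mod (dB1 * dB2) < dB1 * dB2"
    using i by (simp_all add: less_mult_imp_div_less)
  then show "split_index_1 dA2 dB1 dB2 i < dA1 * dB1" "split_index_2 dA2 dB1 dB2 i < dA2 * dB2"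
    unfolding split_index_1_def split_index_2_def using pos
    by (auto intro!: mult_add_less_mult simp: less_mult_imp_div_less)
qed

lemma split_index_tensor_index:
  assumes "a2 < dA2" "b1 < dB1" "b2 < dB2"
  shows "split_index_1 dA2 dB1 dB2 (tensor_index dA2 dB1 dB2 a1 a2 b1 b2) = a1 * dB1 + b1"
    and "split_index_2 dA2 dB1 dB2 (tensor_index dA2 dB1 dB2 a1 a2 b1 b2) = a2 * dB2 + b2"
  unfolding split_index_1_def split_index_2_def using tensor_index_decode[OF assms] by simp_all

lemma tensor_reorder_index:
  assumes "a1 < dA1" "a2 < dA2" "b1 < dB1" "b2 < dB2" "a1' < dA1" "a2' < dA2" "b1' < dB1" "b2' < dB2"
  shows "tensor_reorder dA1 dB1 dA2 dB2 \<rho>1 \<rho>2 $$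
      (tensor_index dA2 dB1 dB2 a1 a2 b1 b2, tensor_index dA2 dB1 dB2 a1' a2' b1' b2')
    = \<rho>1 $$ (a1 * dB1 + b1, a1' * dB1 + b1') * \<rho>2 $$ (a2 * dB2 + b2, a2' * dB2 + b2')"
  using assms by (simp add: tensor_reorder_entry tensor_index_less split_index_tensor_index)

lemma tensor_reorder_partial_trace_2:
  assumes "a1 < dA1" "b1 < dB1" "a1' < dA1" "b1' < dB1"
  shows "(\<Sum>a2<dA2. \<Sum>b2<dB2. tensor_reorder dA1 dB1 dA2 dB2 \<rho>1 \<rho>2 $$
      (tensor_index dA2 dB1 dB2 a1 a2 b1 b2, tensor_index dA2 dB1 dB2 a1' a2 b1' b2))
    = \<rho>1 $$ (a1 * dB1 + b1, a1' * dB1 + b1') * (\<Sum>s<dA2 * dB2. \<rho>2 $$ (s, s))"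
  using assms by (simp add: tensor_reorder_index sum_lessThan_mult_nat sum_distrib_left)

lemma tensor_reorder_partial_trace_1:
  assumes "a2 < dA2" "b2 < dB2" "a2' < dA2" "b2' < dB2"
  shows "(\<Sum>a1<dA1. \<Sum>b1<dB1. tensor_reorder dA1 dB1 dA2 dB2 \<rho>1 \<rho>2 $$
      (tensor_index dA2 dB1 dB2 a1 a2 b1 b2, tensor_index dA2 dB1 dB2 a1 a2' b1 b2'))
    = (\<Sum>r<dA1 * dB1. \<rho>1 $$ (r, r)) * \<rho>2 $$ (a2 * dB2 + b2, a2' * dB2 + b2')"
  using assms by (simp add: tensor_reorder_index sum_lessThan_mult_nat sum_distrib_right)

lemma tensor_reorder_trace:
  "(\<Sum>i<(dA1 * dA2) * (dB1 * dB2). tensor_reorder dA1 dB1 dA2 dB2 \<rho>1 \<rho>2 $$ (i, i))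
   = (\<Sum>r<dA1 * dB1. \<rho>1 $$ (r, r)) * (\<Sum>s<dA2 * dB2. \<rho>2 $$ (s, s))"
proof -
  have "(\<Sum>i<(dA1 * dA2) * (dB1 * dB2). tensor_reorder dA1 dB1 dA2 dB2 \<rho>1 \<rho>2 $$ (i, i))
      = (\<Sum>a1<dA1. \<Sum>b1<dB1. \<Sum>a2<dA2. \<Sum>b2<dB2. tensor_reorder dA1 dB1 dA2 dB2 \<rho>1 \<rho>2 $$
          (tensor_index dA2 dB1 dB2 a1 a2 b1 b2, tensor_index dA2 dB1 dB2 a1 a2 b1 b2))"
    unfolding sum_tensor_index by (rule sum.cong[OF refl], rule sum.swap)
  also have "\<dots> = (\<Sum>a1<dA1. \<Sum>b1<dB1. \<rho>1 $$ (a1 * dB1 + b1, a1 * dB1 + b1)) * (\<Sum>s<dA2 * dB2. \<rho>2 $$ (s, s))"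
    by (simp add: tensor_reorder_partial_trace_2 sum_distrib_right)
  finally show ?thesis
    by (simp add: sum_lessThan_mult_nat)
qed

lemma pure_coh_tensor:
  "pure_coh (dA1 * dA2) (dB1 * dB2) f = shannon_entropy ({..<dA1} \<times> {..<dA2})
     (\<lambda>(a1, a2). \<Sum>b1<dB1. \<Sum>b2<dB2. (cmod (f (tensor_index dA2 dB1 dB2 a1 a2 b1 b2)))\<^sup>2)"
  unfolding pure_coh_def shannon_entropy_lessThan_mult
  by (simp add: block_weight_def sum_lessThan_mult_nat tensor_index_def)

lemma pure_coh_product:
  "pure_coh (dA1 * dA2) (dB1 * dB2) (\<lambda>i. f (split_index_1 dA2 dB1 dB2 i) * g (split_index_2 dA2 dB1 dB2 i))
   = pure_coh dA1 dB1 f * (\<Sum>s<dA2 * dB2. (cmod (g s))\<^sup>2) + (\<Sum>r<dA1 * dB1. (cmod (f r))\<^sup>2) * pure_coh dA2 dB2 g"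
proof -
  have "(\<Sum>b1<dB1. \<Sum>b2<dB2. (cmod (f (split_index_1 dA2 dB1 dB2 (tensor_index dA2 dB1 dB2 a1 a2 b1 b2))
        * g (split_index_2 dA2 dB1 dB2 (tensor_index dA2 dB1 dB2 a1 a2 b1 b2))))\<^sup>2) =
      block_weight dB1 f a1 * block_weight dB2 g a2" if "a2 < dA2" for a1 a2
    using that by (simp add: split_index_tensor_index block_weight_def sum_product norm_mult power_mult_distrib)
  then have "pure_coh (dA1 * dA2) (dB1 * dB2) (\<lambda>i. f (split_index_1 dA2 dB1 dB2 i) * g (split_index_2 dA2 dB1 dB2 i))
      = shannon_entropy ({..<dA1} \<times> {..<dA2}) (\<lambda>(a1, a2). block_weight dB1 f a1 * block_weight dB2 g a2)"
    unfolding pure_coh_tensor shannon_entropy_def by (simp add: sum.cartesian_product')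
  then show ?thesis
    by (simp add: shannon_entropy_product block_weight_nonneg sum_block_weight pure_coh_def)
qed

lemma tensor_reorder_product_family:
  assumes E1: "\<And>r r'. r < dA1 * dB1 \<Longrightarrow> r' < dA1 * dB1 \<Longrightarrow> \<rho>1 $$ (r, r') = (\<Sum>k<m1. u1 k r * cnj (u1 k r'))"
    and E2: "\<And>s s'. s < dA2 * dB2 \<Longrightarrow> s' < dA2 * dB2 \<Longrightarrow> \<rho>2 $$ (s, s') = (\<Sum>k<m2. u2 k s * cnj (u2 k s'))"
    and i: "i < (dA1 * dA2) * (dB1 * dB2)" and j: "j < (dA1 * dA2) * (dB1 * dB2)"
  defines "w \<equiv> \<lambda>(k1, k2) i. u1 k1 (split_index_1 dA2 dB1 dB2 i) * u2 k2 (split_index_2 dA2 dB1 dB2 i)"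
  shows "tensor_reorder dA1 dB1 dA2 dB2 \<rho>1 \<rho>2 $$ (i, j) = (\<Sum>t\<in>{..<m1} \<times> {..<m2}. w t i * cnj (w t j))"
  using split_index_less[OF i] split_index_less[OF j]
  by (simp add: tensor_reorder_entry[OF i j] E1 E2 w_def sum.cartesian_product' sum_product ac_simps)

lemma coh_values_tensor:
  assumes pos: "0 < dA1" "0 < dA2" "0 < dB1" "0 < dB2"
    and s1: "is_state (dA1 * dB1) \<rho>1" and s2: "is_state (dA2 * dB2) \<rho>2"
    and v1: "v1 \<in> coh_values dA1 dB1 \<rho>1" and v2: "v2 \<in> coh_values dA2 dB2 \<rho>2"
  shows "v1 + v2 \<in> coh_values (dA1 * dA2) (dB1 * dB2) (tensor_reorder dA1 dB1 dA2 dB2 \<rho>1 \<rho>2)"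
proof -
  obtain m1 :: nat and u1 where v1_eq: "v1 = (\<Sum>k<m1. pure_coh dA1 dB1 (u1 k))"
    and E1: "\<And>r r'. r < dA1 * dB1 \<Longrightarrow> r' < dA1 * dB1 \<Longrightarrow> \<rho>1 $$ (r, r') = (\<Sum>k<m1. u1 k r * cnj (u1 k r'))"
    by (rule coh_values_elim[OF v1], rule that)
  obtain m2 :: nat and u2 where v2_eq: "v2 = (\<Sum>k<m2. pure_coh dA2 dB2 (u2 k))"
    and E2: "\<And>s s'. s < dA2 * dB2 \<Longrightarrow> s' < dA2 * dB2 \<Longrightarrow> \<rho>2 $$ (s, s') = (\<Sum>k<m2. u2 k s * cnj (u2 k s'))"
    by (rule coh_values_elim[OF v2], rule that)
  have tr1: "(\<Sum>r<dA1 * dB1. \<rho>1 $$ (r, r)) = 1" and tr2: "(\<Sum>s<dA2 * dB2. \<rho>2 $$ (s, s)) = 1"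
    using s1 s2 unfolding is_state_def by auto
  define w where "w = (\<lambda>(k1, k2) i. u1 k1 (split_index_1 dA2 dB1 dB2 i) * u2 k2 (split_index_2 dA2 dB1 dB2 i))"
  have "tensor_reorder dA1 dB1 dA2 dB2 \<rho>1 \<rho>2 $$ (i, j) = (\<Sum>t\<in>{..<m1} \<times> {..<m2}. w t i * cnj (w t j))"
    if "i < (dA1 * dA2) * (dB1 * dB2)" "j < (dA1 * dA2) * (dB1 * dB2)" for i j
    unfolding w_def by (rule tensor_reorder_product_family[OF E1 E2 that])
  moreover have "(\<Sum>i<(dA1 * dA2) * (dB1 * dB2). tensor_reorder dA1 dB1 dA2 dB2 \<rho>1 \<rho>2 $$ (i, i)) = 1"
    using tr1 tr2 by (simp add: tensor_reorder_trace)
  ultimately have "(\<Sum>t\<in>{..<m1} \<times> {..<m2}. pure_coh (dA1 * dA2) (dB1 * dB2) (w t))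
      \<in> coh_values (dA1 * dA2) (dB1 * dB2) (tensor_reorder dA1 dB1 dA2 dB2 \<rho>1 \<rho>2)"
    using pos by (intro pure_coh_family_in_coh_values tensor_reorder_carrier) auto
  moreover have "(\<Sum>t\<in>{..<m1} \<times> {..<m2}. pure_coh (dA1 * dA2) (dB1 * dB2) (w t)) =
      v1 * (\<Sum>k<m2. \<Sum>s<dA2 * dB2. (cmod (u2 k s))\<^sup>2) + (\<Sum>k<m1. \<Sum>r<dA1 * dB1. (cmod (u1 k r))\<^sup>2) * v2"
    unfolding v1_eq v2_eq w_def
    by (simp add: pure_coh_product sum.cartesian_product' sum.distrib sum_product)
  ultimately show ?thesis
    using sum_sq_norms_eq_1[OF E1 tr1] sum_sq_norms_eq_1[OF E2 tr2] by simp
qed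

section \<open>Decompositions induced on the factors\<close>

text \<open>A decomposition \<open>\<Sum>\<^sub>k u\<^sub>k u\<^sub>k\<^sup>*\<close> of \<open>\<rho>\<^sub>1 \<otimes> \<rho>\<^sub>2\<close> induces one of \<open>\<rho>\<^sub>1\<close>, with one term for each \<open>k\<close>
  and each basis vector \<open>|a\<^sub>2 b\<^sub>2\<rangle>\<close> of the second system, and symmetrically one of \<open>\<rho>\<^sub>2\<close>.\<close>

definition marginal_family_1 :: "nat \<Rightarrow> nat \<Rightarrow> nat \<Rightarrow> (nat \<Rightarrow> nat \<Rightarrow> complex) \<Rightarrow> nat \<times> nat \<times> nat \<Rightarrow> nat \<Rightarrow> complex" where
  "marginal_family_1 dA2 dB1 dB2 u =
     (\<lambda>(k, a2, b2) r. u k (tensor_index dA2 dB1 dB2 (r div dB1) a2 (r mod dB1) b2))"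

definition marginal_family_2 :: "nat \<Rightarrow> nat \<Rightarrow> nat \<Rightarrow> (nat \<Rightarrow> nat \<Rightarrow> complex) \<Rightarrow> nat \<times> nat \<times> nat \<Rightarrow> nat \<Rightarrow> complex" where
  "marginal_family_2 dA2 dB1 dB2 u =
     (\<lambda>(k, a1, b1) s. u k (tensor_index dA2 dB1 dB2 a1 (s div dB2) b1 (s mod dB2)))"

lemma marginal_family_1_decomposes:
  assumes E: "\<And>i j. i < (dA1 * dA2) * (dB1 * dB2) \<Longrightarrow> j < (dA1 * dA2) * (dB1 * dB2) \<Longrightarrow>
      tensor_reorder dA1 dB1 dA2 dB2 \<rho>1 \<rho>2 $$ (i, j) = (\<Sum>k<m. u k i * cnj (u k j))"
    and tr2: "(\<Sum>s<dA2 * dB2. \<rho>2 $$ (s, s)) = 1"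
    and r: "r < dA1 * dB1" and r': "r' < dA1 * dB1"
  shows "\<rho>1 $$ (r, r') = (\<Sum>t\<in>{..<m} \<times> {..<dA2} \<times> {..<dB2}.
    marginal_family_1 dA2 dB1 dB2 u t r * cnj (marginal_family_1 dA2 dB1 dB2 u t r'))"
proof -
  let ?ix = "tensor_index dA2 dB1 dB2"
  have dB1: "0 < dB1" using r by (cases "dB1 = 0") auto
  have bounds: "r div dB1 < dA1" "r mod dB1 < dB1" "r' div dB1 < dA1" "r' mod dB1 < dB1"
    using r r' dB1 by (simp_all add: less_mult_imp_div_less)
  have "\<rho>1 $$ (r, r') = (\<Sum>a2<dA2. \<Sum>b2<dB2. tensor_reorder dA1 dB1 dA2 dB2 \<rho>1 \<rho>2 $$
      (?ix (r div dB1) a2 (r mod dB1) b2, ?ix (r' div dB1) a2 (r' mod dB1) b2))"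
    using tensor_reorder_partial_trace_2[OF bounds] tr2 by simp
  also have "\<dots> = (\<Sum>a2<dA2. \<Sum>b2<dB2. \<Sum>k<m.
      u k (?ix (r div dB1) a2 (r mod dB1) b2) * cnj (u k (?ix (r' div dB1) a2 (r' mod dB1) b2)))"
    using bounds by (intro sum.cong refl E tensor_index_less) auto
  also have "\<dots> = (\<Sum>k<m. \<Sum>a2<dA2. \<Sum>b2<dB2.
      u k (?ix (r div dB1) a2 (r mod dB1) b2) * cnj (u k (?ix (r' div dB1) a2 (r' mod dB1) b2)))"
    by (subst sum.swap) (simp add: sum.swap[of _ "{..<m}"])
  finally show ?thesis
    by (simp add: marginal_family_1_def sum.cartesian_product')
qed

lemma marginal_family_2_decomposes:
  assumes E: "\<And>i j. i < (dA1 * dA2) * (dB1 * dB2) \<Longrightarrow> j < (dA1 * dA2) * (dB1 * dB2) \<Longrightarrow>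
      tensor_reorder dA1 dB1 dA2 dB2 \<rho>1 \<rho>2 $$ (i, j) = (\<Sum>k<m. u k i * cnj (u k j))"
    and tr1: "(\<Sum>r<dA1 * dB1. \<rho>1 $$ (r, r)) = 1"
    and s: "s < dA2 * dB2" and s': "s' < dA2 * dB2"
  shows "\<rho>2 $$ (s, s') = (\<Sum>t\<in>{..<m} \<times> {..<dA1} \<times> {..<dB1}.
    marginal_family_2 dA2 dB1 dB2 u t s * cnj (marginal_family_2 dA2 dB1 dB2 u t s'))"
proof -
  let ?ix = "tensor_index dA2 dB1 dB2"
  have dB2: "0 < dB2" using s by (cases "dB2 = 0") auto
  have bounds: "s div dB2 < dA2" "s mod dB2 < dB2" "s' div dB2 < dA2" "s' mod dB2 < dB2"
    using s s' dB2 by (simp_all add: less_mult_imp_div_less)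
  have "\<rho>2 $$ (s, s') = (\<Sum>a1<dA1. \<Sum>b1<dB1. tensor_reorder dA1 dB1 dA2 dB2 \<rho>1 \<rho>2 $$
      (?ix a1 (s div dB2) b1 (s mod dB2), ?ix a1 (s' div dB2) b1 (s' mod dB2)))"
    using tensor_reorder_partial_trace_1[OF bounds] tr1 by simp
  also have "\<dots> = (\<Sum>a1<dA1. \<Sum>b1<dB1. \<Sum>k<m.
      u k (?ix a1 (s div dB2) b1 (s mod dB2)) * cnj (u k (?ix a1 (s' div dB2) b1 (s' mod dB2))))"
    using bounds by (intro sum.cong refl E tensor_index_less) auto
  also have "\<dots> = (\<Sum>k<m. \<Sum>a1<dA1. \<Sum>b1<dB1.
      u k (?ix a1 (s div dB2) b1 (s mod dB2)) * cnj (u k (?ix a1 (s' div dB2) b1 (s' mod dB2))))"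
    by (subst sum.swap) (simp add: sum.swap[of _ "{..<m}"])
  finally show ?thesis
    by (simp add: marginal_family_2_def sum.cartesian_product')
qed

lemma pure_coh_marginal_families_le:
  "(\<Sum>t\<in>{..<dA2} \<times> {..<dB2}. pure_coh dA1 dB1 (marginal_family_1 dA2 dB1 dB2 u (k, t)))
   + (\<Sum>t\<in>{..<dA1} \<times> {..<dB1}. pure_coh dA2 dB2 (marginal_family_2 dA2 dB1 dB2 u (k, t)))
   \<le> pure_coh (dA1 * dA2) (dB1 * dB2) (u k)"
proof -
  let ?c = "\<lambda>a1 a2 b1 b2. (cmod (u k (tensor_index dA2 dB1 dB2 a1 a2 b1 b2)))\<^sup>2"
  have "(\<Sum>t\<in>{..<dA2} \<times> {..<dB2}. pure_coh dA1 dB1 (marginal_family_1 dA2 dB1 dB2 u (k, t))) =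
      (\<Sum>(a2, b2)\<in>{..<dA2} \<times> {..<dB2}. shannon_entropy {..<dA1} (\<lambda>a1. \<Sum>b1<dB1. ?c a1 a2 b1 b2))"
    unfolding pure_coh_def shannon_entropy_def block_weight_def marginal_family_1_def
    by (intro sum.cong) auto
  moreover have "(\<Sum>t\<in>{..<dA1} \<times> {..<dB1}. pure_coh dA2 dB2 (marginal_family_2 dA2 dB1 dB2 u (k, t))) =
      (\<Sum>(a1, b1)\<in>{..<dA1} \<times> {..<dB1}. shannon_entropy {..<dA2} (\<lambda>a2. \<Sum>b2<dB2. ?c a1 a2 b1 b2))"
    unfolding pure_coh_def shannon_entropy_def block_weight_def marginal_family_2_def
    by (intro sum.cong) auto
  ultimately show ?thesis
    unfolding pure_coh_tensor by (simp add: shannon_entropy_marginals_le)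
qed

lemma coh_form_add_le_coh_values_tensor:
  assumes pos: "0 < dA1" "0 < dA2" "0 < dB1" "0 < dB2"
    and s1: "is_state (dA1 * dB1) \<rho>1" and s2: "is_state (dA2 * dB2) \<rho>2"
    and v: "v \<in> coh_values (dA1 * dA2) (dB1 * dB2) (tensor_reorder dA1 dB1 dA2 dB2 \<rho>1 \<rho>2)"
  shows "coh_form dA1 dB1 \<rho>1 + coh_form dA2 dB2 \<rho>2 \<le> v"
proof -
  obtain m :: nat and u where v_eq: "v = (\<Sum>k<m. pure_coh (dA1 * dA2) (dB1 * dB2) (u k))"
    and E: "\<And>i j. i < (dA1 * dA2) * (dB1 * dB2) \<Longrightarrow> j < (dA1 * dA2) * (dB1 * dB2) \<Longrightarrow>
      tensor_reorder dA1 dB1 dA2 dB2 \<rho>1 \<rho>2 $$ (i, j) = (\<Sum>k<m. u k i * cnj (u k j))"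
    by (rule coh_values_elim[OF v], rule that)
  have \<rho>1: "\<rho>1 \<in> carrier_mat (dA1 * dB1) (dA1 * dB1)" and tr1: "(\<Sum>r<dA1 * dB1. \<rho>1 $$ (r, r)) = 1"
    and \<rho>2: "\<rho>2 \<in> carrier_mat (dA2 * dB2) (dA2 * dB2)" and tr2: "(\<Sum>s<dA2 * dB2. \<rho>2 $$ (s, s)) = 1"
    using s1 s2 unfolding is_state_def by auto
  have "coh_form dA1 dB1 \<rho>1 \<le> (\<Sum>t\<in>{..<m} \<times> {..<dA2} \<times> {..<dB2}. pure_coh dA1 dB1 (marginal_family_1 dA2 dB1 dB2 u t))"
    using pos \<rho>1 tr1 marginal_family_1_decomposes[OF E tr2] by (intro coh_form_le_pure_coh_family) auto
  moreover have "coh_form dA2 dB2 \<rho>2 \<le> (\<Sum>t\<in>{..<m} \<times> {..<dA1} \<times> {..<dB1}. pure_coh dA2 dB2 (marginal_family_2 dA2 dB1 dB2 u t))"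
    using pos \<rho>2 tr2 marginal_family_2_decomposes[OF E tr1] by (intro coh_form_le_pure_coh_family) auto
  moreover have "(\<Sum>t\<in>{..<m} \<times> {..<dA2} \<times> {..<dB2}. pure_coh dA1 dB1 (marginal_family_1 dA2 dB1 dB2 u t))
      + (\<Sum>t\<in>{..<m} \<times> {..<dA1} \<times> {..<dB1}. pure_coh dA2 dB2 (marginal_family_2 dA2 dB1 dB2 u t)) \<le> v"
    unfolding v_eq sum.cartesian_product'[of _ "{..<m}"] sum.distrib[symmetric]
    by (intro sum_mono) (simp add: pure_coh_marginal_families_le sum.cartesian_product'[symmetric])
  ultimately show ?thesis by linarith
qed

lemma le_cInf_add_cInf:
  fixes c :: real
  assumes "A \<noteq> {}" and "B \<noteq> {}" and "\<And>a b. a \<in> A \<Longrightarrow> b \<in> B \<Longrightarrow> c \<le> a + b"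
  shows "c \<le> Inf A + Inf B"
proof -
  have bound: "c - a \<le> Inf B" if "a \<in> A" for a
    using assms(2)
  proof (rule cInf_greatest)
    show "c - a \<le> b" if "b \<in> B" for b
      using assms(3)[OF \<open>a \<in> A\<close> that] by linarith
  qed
  have "c - Inf B \<le> Inf A"
    using assms(1)
  proof (rule cInf_greatest)
    show "c - Inf B \<le> a" if "a \<in> A" for a
      using bound[OF that] by linarith
  qed
  then show ?thesis by simp
qed

theorem proposition11:
  fixes dA1 dA2 dB1 dB2 :: nat and \<rho>1 \<rho>2 :: "complex mat"
  assumes "0 < dA1" "0 < dA2" "0 < dB1" "0 < dB2"
    and "is_state (dA1 * dB1) \<rho>1" and "is_state (dA2 * dB2) \<rho>2"
  shows "coh_form (dA1 * dA2) (dB1 * dB2) (tensor_reorder dA1 dB1 dA2 dB2 \<rho>1 \<rho>2)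
         = coh_form dA1 dB1 \<rho>1 + coh_form dA2 dB2 \<rho>2"
proof (rule antisym)
  let ?C = "coh_values (dA1 * dA2) (dB1 * dB2) (tensor_reorder dA1 dB1 dA2 dB2 \<rho>1 \<rho>2)"
  have ne1: "coh_values dA1 dB1 \<rho>1 \<noteq> {}" and ne2: "coh_values dA2 dB2 \<rho>2 \<noteq> {}"
    using assms by (simp_all add: coh_values_nonempty)
  have sum_in: "v1 + v2 \<in> ?C" if "v1 \<in> coh_values dA1 dB1 \<rho>1" "v2 \<in> coh_values dA2 dB2 \<rho>2" for v1 v2
    using assms that by (rule coh_values_tensor)
  show "coh_form (dA1 * dA2) (dB1 * dB2) (tensor_reorder dA1 dB1 dA2 dB2 \<rho>1 \<rho>2)
      \<le> coh_form dA1 dB1 \<rho>1 + coh_form dA2 dB2 \<rho>2"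
    unfolding coh_form_eq_Inf
    using ne1 ne2 by (rule le_cInf_add_cInf) (rule cInf_lower[OF sum_in bdd_below_coh_values])
  have "?C \<noteq> {}"
    using ne1 ne2 sum_in by blast
  then show "coh_form dA1 dB1 \<rho>1 + coh_form dA2 dB2 \<rho>2
      \<le> coh_form (dA1 * dA2) (dB1 * dB2) (tensor_reorder dA1 dB1 dA2 dB2 \<rho>1 \<rho>2)"
    unfolding coh_form_eq_Inf[of "dA1 * dA2"]
    using assms by (intro cInf_greatest coh_form_add_le_coh_values_tensor)
qed

end
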